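(* Let $0<c<1$, $\beta_1,\dots,\beta_p>0$ with $\beta_i-\beta_j\notin\mathbb Z$ for $i\neq j$, and let $M^{(\mathrm{II})}_{2:\vec n}$ be the type II multiple Meixner polynomials of the second kind. Then for $x\in\mathbb N_0$ (and hence as polynomials) $$M^{(\mathrm{II})}_{2:\vec n}(x;\vec\beta,c)=\Big(\frac{c}{c-1}\Big)^{|\vec n|}\prod_{j=1}^p(\beta_j)_{n_j}\,\frac{1}{c^x}\;{}_{p+1}F_p\!\left(\begin{matrix}-x,\beta_1+n_1,\dots,\beta_p+n_p\\ \beta_1,\dots,\beta_p\end{matrix};1-c\right).$$
   Context: $(a)_m$ is the Pochhammer symbol; ${}_{p+1}F_p(a_1,\dots,a_{p+1};b_1,\dots,b_p;z)=\sum_{l\ge0}\frac{(a_1)_l\cdots(a_{p+1})_l}{(b_1)_l\cdots(b_p)_l}\frac{z^l}{l!}$. Multiple Meixner weights of the second kind: $w_i(x)=\frac{\Gamma(\beta_i+x)}{\Gamma(\beta_i)\Gamma(x+1)}c^x$, $x\in\Delta=\mathbb N_0$, $i=1,\dots,p$. The type II polynomial for multi-index $\vec n\in\mathbb N_0^p$ is the monic polynomial $B$ of degree $|\vec n|=n_1+\dots+n_p$ with $\sum_{k\ge0}k^jB(k)w_i(k)=0$ for $0\le j\le n_i-1$, $1\le i\le p$. *)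

theory Defs
  imports "HOL-Analysis.Analysis" "HOL-Computational_Algebra.Polynomial"
begin

definition hypergeom :: "real list \<Rightarrow> real list \<Rightarrow> real \<Rightarrow> real" where
  "hypergeom as bs z =
     (\<Sum>l. (prod_list (map (\<lambda>a. pochhammer a l) as) / prod_list (map (\<lambda>b. pochhammer b l) bs))
           * z ^ l / fact l)"

definition meixner2_weight :: "real \<Rightarrow> real \<Rightarrow> nat \<Rightarrow> real" where
  "meixner2_weight \<beta> c x = Gamma (\<beta> + real x) / (Gamma \<beta> * Gamma (real x + 1)) * c ^ x"

definition is_typeII_meixner2 ::
  "nat \<Rightarrow> (nat \<Rightarrow> real) \<Rightarrow> real \<Rightarrow> (nat \<Rightarrow> nat) \<Rightarrow> real poly \<Rightarrow> bool" where
  "is_typeII_meixner2 p \<beta> c n B \<longleftrightarrow>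
     degree B = (\<Sum>i<p. n i) \<and> lead_coeff B = 1 \<and>
     (\<forall>i<p. \<forall>j<n i.
        (\<lambda>k. real k ^ j * poly B (real k) * meixner2_weight (\<beta> i) c k) sums 0)"

end

theory Submission
  imports Defs
begin

text \<open>
  Write \<open>w\<^sub>g(k) = (g)\<^sub>k c\<^sup>k / k!\<close>. By the negative binomial series the falling factorial
  moments are \<open>\<Sum>\<^sub>k k(k-1)\<dots>(k-s+1) w\<^sub>g(k) = (g)\<^sub>s c\<^sup>s (1 - c) powr (-g-s)\<close>. Consequently, if
  \<open>R = \<Sum>\<^sub>t q\<^sub>t x(x-1)\<dots>(x-t+1)\<close> and \<open>Q\<close> is obtained by scaling \<open>q\<^sub>t\<close> by \<open>((c-1)/c)\<^sup>t\<close>, then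
  \<open>\<Sum>\<^sub>k Q(k) w\<^sub>g(k) = (1 - c) powr (-g) R(-g)\<close>. Take \<open>R(y) = \<Prod>\<^sub>j (\<beta>\<^sub>j + y)\<^bsub>n\<^sub>j\<^esub>\<close>.
  Since \<open>(\<beta>\<^sub>i + k)\<^sub>t w\<^bsub>\<beta>\<^sub>i\<^esub>(k) = (\<beta>\<^sub>i)\<^sub>t w\<^bsub>\<beta>\<^sub>i+t\<^esub>(k)\<close>, the moment of \<open>Q\<close> against this
  rising factorial contains the factor \<open>(-t)\<^bsub>n\<^sub>i\<^esub>\<close>, which vanishes for \<open>t < n\<^sub>i\<close>; so the
  normalised \<open>Q\<close> satisfies the type II conditions. For \<open>t = n\<^sub>i\<close> the moment is nonzero because
  no two \<open>\<beta>\<^sub>j\<close> differ by an integer, which yields uniqueness by induction on \<open>|n|\<close>.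
  Finally \<open>Q(x) = c\<^sup>-\<^sup>x \<Sum>\<^sub>l C(x,l) (c - 1)\<^sup>l R(l)\<close> by the binomial theorem, and this
  is the terminating hypergeometric series.
\<close>

lemma degree_diff_smult_monic_le:
  fixes P Q :: "'a::comm_ring_1 poly"
  assumes "degree P \<le> Suc d" "degree Q = Suc d" "lead_coeff Q = 1"
  shows "degree (P - smult (coeff P (Suc d)) Q) \<le> d"
proof (rule degree_le, intro allI impI)
  fix i assume "d < i"
  show "coeff (P - smult (coeff P (Suc d)) Q) i = 0"
  proof (cases "i = Suc d")
    case False
    with \<open>d < i\<close> have "coeff P i = 0" "coeff Q i = 0"
      using assms by (auto intro: coeff_eq_0)
    then show ?thesis by simp
  qed (use assms in simp)
qed

lemma monic_basis_expansion:
  fixes b :: "nat \<Rightarrow> 'a::comm_ring_1 poly"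
  assumes degree_b: "\<And>t. degree (b t) = t" and lead_b: "\<And>t. lead_coeff (b t) = 1"
    and "degree P \<le> d"
  shows "\<exists>a. P = (\<Sum>t\<le>d. smult (a t) (b t))"
  using \<open>degree P \<le> d\<close>
proof (induction d arbitrary: P)
  case 0
  have "b 0 = 1"
    using degree_0_id[of "b 0"] degree_b[of 0] lead_b[of 0] by (simp add: one_pCons)
  moreover have "P = [:coeff P 0:]"
    using degree_0_id[of P] 0 by simp
  ultimately have "P = (\<Sum>t\<le>0. smult (coeff P 0) (b t))"
    by simp
  then show ?case by (rule exI[of _ "\<lambda>_. coeff P 0"])
next
  case (Suc d)
  define P' where "P' = P - smult (coeff P (Suc d)) (b (Suc d))"
  have "degree P' \<le> d"
    unfolding P'_def using Suc.prems degree_b lead_b by (rule degree_diff_smult_monic_le)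
  then obtain a where a: "P' = (\<Sum>t\<le>d. smult (a t) (b t))"
    using Suc.IH by blast
  have "(\<Sum>t\<le>Suc d. smult ((a(Suc d := coeff P (Suc d))) t) (b t))
      = P' + smult (coeff P (Suc d)) (b (Suc d))"
    by (simp add: a)
  then show ?case
    by (intro exI[of _ "a(Suc d := coeff P (Suc d))"]) (simp add: P'_def)
qed

lemma degree_monic_basis_sum_le:
  fixes b :: "nat \<Rightarrow> 'a::comm_ring_1 poly"
  assumes "\<And>t. degree (b t) = t"
  shows "degree (\<Sum>t\<le>d. smult (a t) (b t)) \<le> d"
  by (rule degree_sum_le) (auto intro: order.trans[OF degree_smult_le] simp: assms)

lemma coeff_monic_basis_sum_top:
  fixes b :: "nat \<Rightarrow> 'a::comm_ring_1 poly"
  assumes degree_b: "\<And>t. degree (b t) = t" and lead_b: "\<And>t. lead_coeff (b t) = 1"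
  shows "coeff (\<Sum>t\<le>d. smult (a t) (b t)) d = a d"
proof -
  have "coeff (\<Sum>t\<le>d. smult (a t) (b t)) d = (\<Sum>t\<le>d. a t * coeff (b t) d)"
    by (simp add: coeff_sum)
  also have "\<dots> = (\<Sum>t\<in>{d}. a t * coeff (b t) d)"
  proof (rule sum.mono_neutral_right)
    show "\<forall>t\<in>{..d} - {d}. a t * coeff (b t) d = 0"
      using degree_b by (auto simp: coeff_eq_0 less_le)
  qed auto
  also have "\<dots> = a d"
    using lead_b[of d] degree_b[of d] by simp
  finally show ?thesis .
qed

lemma sums_zero_monic_basis:
  fixes b :: "nat \<Rightarrow> real poly"
  assumes degree_b: "\<And>t. degree (b t) = t" and lead_b: "\<And>t. lead_coeff (b t) = 1"
    and zero: "\<And>t. t \<le> d \<Longrightarrow> (\<lambda>k. poly (b t) (x k) * f k) sums 0"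
    and "degree T \<le> d"
  shows "(\<lambda>k. poly T (x k) * f k) sums 0"
proof -
  obtain a where T: "T = (\<Sum>t\<le>d. smult (a t) (b t))"
    using monic_basis_expansion[OF degree_b lead_b \<open>degree T \<le> d\<close>] by blast
  have "(\<lambda>k. \<Sum>t\<le>d. a t * (poly (b t) (x k) * f k)) sums (\<Sum>t\<le>d. a t * 0)"
    by (intro sums_sum sums_mult zero) simp
  then show ?thesis
    by (simp add: T poly_sum sum_distrib_left sum_distrib_right mult_ac)
qed

definition falling_poly :: "nat \<Rightarrow> 'a::comm_ring_1 poly" where
  "falling_poly s = (\<Prod>i<s. [:- of_nat i, 1:])"

definition rising_poly :: "'a::comm_ring_1 \<Rightarrow> nat \<Rightarrow> 'a poly" where
  "rising_poly g t = (\<Prod>i<t. [:g + of_nat i, 1:])"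

lemma degree_falling_poly [simp]: "degree (falling_poly s :: 'a::idom poly) = s"
  unfolding falling_poly_def by (subst degree_prod_eq_sum_degree) auto

lemma lead_coeff_falling_poly: "lead_coeff (falling_poly s :: 'a::idom poly) = 1"
  unfolding falling_poly_def by (simp add: lead_coeff_prod)

lemma degree_rising_poly [simp]: "degree (rising_poly g t :: 'a::idom poly) = t"
  unfolding rising_poly_def by (subst degree_prod_eq_sum_degree) auto

lemma lead_coeff_rising_poly: "lead_coeff (rising_poly g t :: 'a::idom poly) = 1"
  unfolding rising_poly_def by (simp add: lead_coeff_prod)

lemma poly_falling_poly_of_nat:
  "poly (falling_poly s) (of_nat k :: 'a::field_char_0) = fact s * of_nat (k choose s)"
  by (simp add: falling_poly_def poly_prod gbinomial_mult_fact atLeast0LessThan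
      binomial_gbinomial flip: of_nat_diff)

lemma poly_falling_poly_minus:
  "poly (falling_poly s) (- g :: 'a::comm_ring_1) = (-1) ^ s * pochhammer g s"
proof -
  have "poly (falling_poly s) (- g) = (\<Prod>i<s. - 1 * (g + of_nat i))"
    by (simp add: falling_poly_def poly_prod algebra_simps)
  also have "\<dots> = (\<Prod>i<s. - 1) * (\<Prod>i<s. g + of_nat i)"
    by (rule prod.distrib)
  also have "\<dots> = (-1) ^ s * pochhammer g s"
    by (simp add: pochhammer_prod atLeast0LessThan)
  finally show ?thesis .
qed

lemma poly_rising_poly: "poly (rising_poly g t) x = pochhammer (g + x) t"
  by (simp add: rising_poly_def poly_prod pochhammer_prod atLeast0LessThan algebra_simps)

definition meixner_weight :: "real \<Rightarrow> real \<Rightarrow> nat \<Rightarrow> real" where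
  "meixner_weight g c k = pochhammer g k * c ^ k / fact k"

lemma meixner2_weight_eq_meixner_weight:
  assumes "0 < b"
  shows "meixner2_weight b c k = meixner_weight b c k"
proof -
  have b: "b \<notin> \<int>\<^sub>\<le>\<^sub>0"
    using assms by (auto elim!: nonpos_Ints_cases)
  then have "Gamma b \<noteq> 0"
    by (simp add: Gamma_eq_zero_iff)
  moreover have "Gamma (real k + 1) = fact k"
    using Gamma_fact[of k] by (simp add: add.commute)
  ultimately show ?thesis
    unfolding meixner2_weight_def meixner_weight_def pochhammer_Gamma[OF b] by simp
qed

lemma meixner_weight_sums:
  assumes "\<bar>c\<bar> < 1"
  shows "meixner_weight g c sums (1 - c) powr (- g)"
proof -
  have "(\<lambda>k. ((- g) gchoose k) * (- c) ^ k) sums (1 + - c) powr (- g)"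
    using assms by (intro gen_binomial_real) simp
  moreover have "((- g) gchoose k) * (- c) ^ k = meixner_weight g c k" for k
  proof -
    have "((- g) gchoose k) * (- c) ^ k = ((-1) ^ k * (-1) ^ k) * meixner_weight g c k"
      by (simp add: gbinomial_pochhammer power_minus[of c] meixner_weight_def mult_ac)
    also have "(-1::real) ^ k * (-1) ^ k = 1"
      by (simp flip: power_mult_distrib)
    finally show ?thesis by simp
  qed
  ultimately show ?thesis by simp
qed

lemma rising_poly_mult_meixner_weight:
  "poly (rising_poly g t) (real k) * meixner_weight g c k = pochhammer g t * meixner_weight (g + real t) c k"
proof -
  have "pochhammer g k * pochhammer (g + real k) t = pochhammer g t * pochhammer (g + real t) k"
    by (metis add.commute pochhammer_product')
  then show ?thesis
    by (simp add: poly_rising_poly meixner_weight_def field_simps)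
qed

lemma falling_poly_meixner_moment:
  assumes "\<bar>c\<bar> < 1"
  shows "(\<lambda>k. poly (falling_poly s) (real k) * meixner_weight g c k)
           sums (pochhammer g s * c ^ s * (1 - c) powr (- (g + real s)))"
proof -
  define f where "f = (\<lambda>k. poly (falling_poly s) (real k) * meixner_weight g c k)"
  have shift: "f (j + s) = pochhammer g s * c ^ s * meixner_weight (g + real s) c j" for j
  proof -
    have "poly (falling_poly s) (real (j + s)) = fact (j + s) / fact j"
      by (simp add: poly_falling_poly_of_nat binomial_fact del: of_nat_add)
    moreover have "pochhammer g (j + s) = pochhammer g s * pochhammer (g + real s) j"
      by (metis add.commute pochhammer_product')
    ultimately show ?thesis
      by (simp add: f_def meixner_weight_def power_add field_simps)
  qed
  have "(\<Sum>k<s. f k) = 0"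
    by (auto intro!: sum.neutral simp: f_def poly_falling_poly_of_nat binomial_eq_0)
  moreover have "(\<lambda>j. f (j + s)) sums (pochhammer g s * c ^ s * (1 - c) powr (- (g + real s)))"
    unfolding shift by (intro sums_mult meixner_weight_sums assms)
  ultimately have "f sums (pochhammer g s * c ^ s * (1 - c) powr (- (g + real s)))"
    using sums_iff_shift[of f s] by simp
  then show ?thesis
    unfolding f_def .
qed

definition falling_coeffs :: "'a::idom poly \<Rightarrow> nat \<Rightarrow> 'a" where
  "falling_coeffs P = (SOME a. P = (\<Sum>t\<le>degree P. smult (a t) (falling_poly t)))"

lemma falling_poly_expansion:
  "P = (\<Sum>t\<le>degree P. smult (falling_coeffs P t) (falling_poly t))"
proof -
  have "\<exists>a. P = (\<Sum>t\<le>degree P. smult (a t) (falling_poly t))"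
    by (rule monic_basis_expansion[OF degree_falling_poly lead_coeff_falling_poly]) simp
  then show ?thesis
    unfolding falling_coeffs_def by (rule someI_ex)
qed

lemma falling_coeffs_degree: "falling_coeffs P (degree P) = lead_coeff P"
  using arg_cong[OF falling_poly_expansion, of "\<lambda>Q. coeff Q (degree P)" P]
  by (simp add: coeff_monic_basis_sum_top[OF degree_falling_poly lead_coeff_falling_poly])

definition falling_scale :: "'a::idom \<Rightarrow> 'a poly \<Rightarrow> 'a poly" where
  "falling_scale r P = (\<Sum>t\<le>degree P. smult (falling_coeffs P t * r ^ t) (falling_poly t))"

lemma coeff_falling_scale_degree:
  "coeff (falling_scale r P) (degree P) = r ^ degree P * lead_coeff P"
  by (simp add: falling_scale_def falling_coeffs_degree
      coeff_monic_basis_sum_top[OF degree_falling_poly lead_coeff_falling_poly])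

lemma degree_falling_scale:
  assumes "r \<noteq> 0"
  shows "degree (falling_scale r P) = degree P"
proof (rule antisym)
  show "degree (falling_scale r P) \<le> degree P"
    unfolding falling_scale_def by (rule degree_monic_basis_sum_le) simp
  show "degree P \<le> degree (falling_scale r P)"
    using assms coeff_falling_scale_degree[of r P]
    by (cases "P = 0") (auto intro: le_degree)
qed

lemma falling_scale_meixner_moment:
  assumes "c \<noteq> 0" "\<bar>c\<bar> < 1"
  shows "(\<lambda>k. poly (falling_scale ((c - 1) / c) P) (real k) * meixner_weight g c k)
           sums ((1 - c) powr (- g) * poly P (- g))"
proof -
  define q where "q = falling_coeffs P"
  have val: "q t * ((c - 1) / c) ^ t * (pochhammer g t * c ^ t * (1 - c) powr (- (g + real t)))
      = (1 - c) powr (- g) * (q t * poly (falling_poly t) (- g))" for t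
  proof -
    have e1: "(1 - c) powr (- (g + real t)) = (1 - c) powr (- g) / (1 - c) ^ t"
      using assms(2) by (simp add: powr_diff powr_realpow diff_conv_add_uminus[symmetric])
    have e2: "((c - 1) / c) ^ t * c ^ t = (-1) ^ t * (1 - c) ^ t"
      using assms(1) by (simp flip: power_mult_distrib)
    have "q t * ((c - 1) / c) ^ t * (pochhammer g t * c ^ t * (1 - c) powr (- (g + real t)))
        = q t * (((c - 1) / c) ^ t * c ^ t) * pochhammer g t * (1 - c) powr (- (g + real t))"
      by (simp add: ac_simps)
    also have "\<dots> = q t * ((-1) ^ t * (1 - c) ^ t) * pochhammer g t * ((1 - c) powr (- g) / (1 - c) ^ t)"
      by (simp only: e1 e2)
    also have "\<dots> = (1 - c) powr (- g) * (q t * ((-1) ^ t * pochhammer g t))"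
      using assms(2) by (simp add: field_simps)
    finally show ?thesis
      by (simp add: poly_falling_poly_minus)
  qed
  have "(\<lambda>k. poly (falling_scale ((c - 1) / c) P) (real k) * meixner_weight g c k)
      = (\<lambda>k. \<Sum>t\<le>degree P. q t * ((c - 1) / c) ^ t * (poly (falling_poly t) (real k) * meixner_weight g c k))"
    by (simp add: falling_scale_def q_def poly_sum sum_distrib_left sum_distrib_right mult_ac)
  also have "\<dots> sums (\<Sum>t\<le>degree P. q t * ((c - 1) / c) ^ t *
              (pochhammer g t * c ^ t * (1 - c) powr (- (g + real t))))"
    using assms(2) by (intro sums_sum sums_mult falling_poly_meixner_moment)
  also have "(\<Sum>t\<le>degree P. q t * ((c - 1) / c) ^ t *
              (pochhammer g t * c ^ t * (1 - c) powr (- (g + real t))))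
      = (1 - c) powr (- g) * poly P (- g)"
    unfolding val by (subst (2) falling_poly_expansion) (simp add: q_def poly_sum sum_distrib_left)
  finally show ?thesis .
qed

lemma sum_binomial_mult_binomial:
  fixes z :: "'a::comm_ring_1"
  shows "(\<Sum>l\<le>x. of_nat (x choose l) * of_nat (l choose t) * z ^ l)
           = of_nat (x choose t) * z ^ t * (1 + z) ^ (x - t)"
proof (cases "t \<le> x")
  case True
  define f where "f = (\<lambda>l. of_nat (x choose l) * of_nat (l choose t) * z ^ l)"
  have "(\<Sum>l\<le>x. f l) = (\<Sum>l\<in>{t..x}. f l)"
    by (rule sum.mono_neutral_right) (auto simp: f_def binomial_eq_0)
  also have "\<dots> = (\<Sum>i\<le>x - t. f (i + t))"
    using sum.shift_bounds_cl_nat_ivl[of f 0 t "x - t"] True by (simp add: atLeast0AtMost)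
  also have "\<dots> = (\<Sum>i\<le>x - t. of_nat (x choose t) * z ^ t * (of_nat ((x - t) choose i) * z ^ i))"
  proof (rule sum.cong)
    fix i assume "i \<in> {..x - t}"
    then have "(x choose (i + t)) * ((i + t) choose t) = (x choose t) * ((x - t) choose i)"
      using choose_mult[of t "i + t" x] True by simp
    then show "f (i + t) = of_nat (x choose t) * z ^ t * (of_nat ((x - t) choose i) * z ^ i)"
      unfolding f_def by (metis (no_types, lifting) mult.commute mult.left_commute of_nat_mult power_add)
  qed simp
  also have "\<dots> = of_nat (x choose t) * z ^ t * (\<Sum>i\<le>x - t. of_nat ((x - t) choose i) * z ^ i)"
    by (simp add: sum_distrib_left)
  also have "\<dots> = of_nat (x choose t) * z ^ t * (1 + z) ^ (x - t)"
    using binomial_ring[of z 1 "x - t"] by (simp add: add.commute)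
  finally show ?thesis
    by (simp add: f_def)
qed (auto intro!: sum.neutral simp: binomial_eq_0)

lemma binomial_sum_falling_scale:
  fixes z :: real
  assumes "1 + z \<noteq> 0"
  shows "(\<Sum>l\<le>x. real (x choose l) * z ^ l * poly P (real l))
           = (1 + z) ^ x * poly (falling_scale (z / (1 + z)) P) (real x)"
proof -
  define q where "q = falling_coeffs P"
  have "(\<Sum>l\<le>x. real (x choose l) * z ^ l * poly P (real l))
      = (\<Sum>l\<le>x. \<Sum>t\<le>degree P. q t * fact t * (real (x choose l) * real (l choose t) * z ^ l))"
    by (subst falling_poly_expansion)
      (simp add: q_def poly_sum poly_falling_poly_of_nat sum_distrib_left mult_ac)
  also have "\<dots> = (\<Sum>t\<le>degree P. q t * fact t * (real (x choose t) * z ^ t * (1 + z) ^ (x - t)))"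
    by (subst sum.swap) (simp add: sum_binomial_mult_binomial flip: sum_distrib_left)
  also have "\<dots> = (\<Sum>t\<le>degree P. (1 + z) ^ x * (q t * (z / (1 + z)) ^ t * (fact t * real (x choose t))))"
  proof (rule sum.cong)
    fix t
    show "q t * fact t * (real (x choose t) * z ^ t * (1 + z) ^ (x - t))
        = (1 + z) ^ x * (q t * (z / (1 + z)) ^ t * (fact t * real (x choose t)))"
    proof (cases "t \<le> x")
      case True
      then have "(1 + z) ^ x = (1 + z) ^ t * (1 + z) ^ (x - t)"
        by (simp flip: power_add)
      then show ?thesis
        using assms by (simp add: power_divide)
    qed (simp add: binomial_eq_0)
  qed simp
  also have "\<dots> = (1 + z) ^ x * poly (falling_scale (z / (1 + z)) P) (real x)"
    by (simp add: falling_scale_def q_def poly_sum poly_falling_poly_of_nat sum_distrib_left)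
  finally show ?thesis .
qed

definition rising_product :: "nat \<Rightarrow> (nat \<Rightarrow> 'a::comm_ring_1) \<Rightarrow> (nat \<Rightarrow> nat) \<Rightarrow> 'a poly" where
  "rising_product p \<beta> m = (\<Prod>j<p. rising_poly (\<beta> j) (m j))"

lemma poly_rising_product: "poly (rising_product p \<beta> m) y = (\<Prod>j<p. pochhammer (\<beta> j + y) (m j))"
  by (simp add: rising_product_def poly_prod poly_rising_poly)

lemma degree_rising_product: "degree (rising_product p \<beta> m :: 'a::idom poly) = (\<Sum>j<p. m j)"
proof -
  have "rising_poly g t \<noteq> (0 :: 'a poly)" for g t
    using lead_coeff_rising_poly[of g t] by auto
  then show ?thesis
    unfolding rising_product_def by (subst degree_prod_eq_sum_degree) auto
qed

lemma lead_coeff_rising_product: "lead_coeff (rising_product p \<beta> m :: 'a::idom poly) = 1"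
  by (simp only: rising_product_def lead_coeff_prod lead_coeff_rising_poly prod.neutral_const)

definition meixner2_poly :: "nat \<Rightarrow> (nat \<Rightarrow> real) \<Rightarrow> real \<Rightarrow> (nat \<Rightarrow> nat) \<Rightarrow> real poly" where
  "meixner2_poly p \<beta> c m =
     smult ((c / (c - 1)) ^ (\<Sum>j<p. m j)) (falling_scale ((c - 1) / c) (rising_product p \<beta> m))"

lemma
  assumes "c \<noteq> 0" "c \<noteq> 1"
  shows degree_meixner2_poly: "degree (meixner2_poly p \<beta> c m) = (\<Sum>j<p. m j)"
    and lead_coeff_meixner2_poly: "lead_coeff (meixner2_poly p \<beta> c m) = 1"
proof -
  have "(c - 1) / c \<noteq> 0" "c / (c - 1) \<noteq> 0"
    using assms by auto
  then show "degree (meixner2_poly p \<beta> c m) = (\<Sum>j<p. m j)"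
    by (simp add: meixner2_poly_def degree_falling_scale degree_rising_product)
  moreover have "coeff (falling_scale ((c - 1) / c) (rising_product p \<beta> m)) (\<Sum>j<p. m j)
      = ((c - 1) / c) ^ (\<Sum>j<p. m j)"
    using coeff_falling_scale_degree[of "(c - 1) / c" "rising_product p \<beta> m"]
      lead_coeff_rising_product[of p \<beta> m]
    by (simp add: degree_rising_product)
  ultimately show "lead_coeff (meixner2_poly p \<beta> c m) = 1"
    using assms by (simp add: meixner2_poly_def flip: power_mult_distrib)
qed

lemma meixner2_poly_moment:
  assumes "c \<noteq> 0" "\<bar>c\<bar> < 1"
  shows "(\<lambda>k. poly (meixner2_poly p \<beta> c m) (real k) * meixner_weight g c k)
           sums ((c / (c - 1)) ^ (\<Sum>j<p. m j) * (1 - c) powr (- g) * (\<Prod>j<p. pochhammer (\<beta> j - g) (m j)))"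
  using sums_mult[OF falling_scale_meixner_moment[OF assms, of "rising_product p \<beta> m" g],
      of "(c / (c - 1)) ^ (\<Sum>j<p. m j)"]
  by (simp add: meixner2_poly_def poly_rising_product mult_ac)

lemma meixner2_poly_rising_moment:
  assumes "c \<noteq> 0" "\<bar>c\<bar> < 1"
  shows "(\<lambda>k. poly (rising_poly g t) (real k) * poly (meixner2_poly p \<beta> c m) (real k) * meixner_weight g c k)
           sums (pochhammer g t * ((c / (c - 1)) ^ (\<Sum>j<p. m j) * (1 - c) powr (- (g + real t))
                   * (\<Prod>j<p. pochhammer (\<beta> j - (g + real t)) (m j))))"
proof -
  have shift: "poly (rising_poly g t) (real k) * poly (meixner2_poly p \<beta> c m) (real k) * meixner_weight g c k
      = pochhammer g t * (poly (meixner2_poly p \<beta> c m) (real k) * meixner_weight (g + real t) c k)" for k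
    by (simp add: mult_ac flip: rising_poly_mult_meixner_weight)
  show ?thesis
    unfolding shift by (rule sums_mult[OF meixner2_poly_moment[OF assms]])
qed

definition meixner2_orth :: "nat \<Rightarrow> (nat \<Rightarrow> real) \<Rightarrow> real \<Rightarrow> (nat \<Rightarrow> nat) \<Rightarrow> real poly \<Rightarrow> bool" where
  "meixner2_orth p \<beta> c m D \<longleftrightarrow>
     (\<forall>i<p. \<forall>j<m i. (\<lambda>k. real k ^ j * poly D (real k) * meixner_weight (\<beta> i) c k) sums 0)"

lemma meixner2_orth_diff:
  assumes "meixner2_orth p \<beta> c m D" "meixner2_orth p \<beta> c m E"
  shows "meixner2_orth p \<beta> c m (D - E)"
  unfolding meixner2_orth_def
proof (intro allI impI)
  fix i j assume "i < p" "j < m i"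
  then have "(\<lambda>k. real k ^ j * poly D (real k) * meixner_weight (\<beta> i) c k
      - real k ^ j * poly E (real k) * meixner_weight (\<beta> i) c k) sums (0 - 0)"
    using assms unfolding meixner2_orth_def by (intro sums_diff) auto
  then show "(\<lambda>k. real k ^ j * poly (D - E) (real k) * meixner_weight (\<beta> i) c k) sums 0"
    by (simp add: algebra_simps)
qed

lemma meixner2_orth_smult:
  assumes "meixner2_orth p \<beta> c m D"
  shows "meixner2_orth p \<beta> c m (smult a D)"
  unfolding meixner2_orth_def
proof (intro allI impI)
  fix i j assume "i < p" "j < m i"
  then have "(\<lambda>k. a * (real k ^ j * poly D (real k) * meixner_weight (\<beta> i) c k)) sums (a * 0)"
    using assms unfolding meixner2_orth_def by (intro sums_mult) auto
  then show "(\<lambda>k. real k ^ j * poly (smult a D) (real k) * meixner_weight (\<beta> i) c k) sums 0"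
    by (simp add: mult_ac)
qed

lemma meixner2_orth_mono:
  assumes "meixner2_orth p \<beta> c m D" "\<And>i. i < p \<Longrightarrow> m' i \<le> m i"
  shows "meixner2_orth p \<beta> c m' D"
  unfolding meixner2_orth_def
proof (intro allI impI)
  fix i j assume "i < p" "j < m' i"
  then have "j < m i"
    using assms(2)[of i] by linarith
  with \<open>i < p\<close> show "(\<lambda>k. real k ^ j * poly D (real k) * meixner_weight (\<beta> i) c k) sums 0"
    using assms(1) unfolding meixner2_orth_def by blast
qed

lemma meixner2_orth_test_poly:
  assumes "meixner2_orth p \<beta> c m D" "i < p" "degree T < m i"
  shows "(\<lambda>k. poly T (real k) * poly D (real k) * meixner_weight (\<beta> i) c k) sums 0"
proof -
  have monomials: "(\<lambda>k. poly (monom 1 t) (real k) * (poly D (real k) * meixner_weight (\<beta> i) c k)) sums 0"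
    if "t \<le> degree T" for t
    using assms that unfolding meixner2_orth_def by (simp add: poly_monom mult_ac)
  have "(\<lambda>k. poly T (real k) * (poly D (real k) * meixner_weight (\<beta> i) c k)) sums 0"
    by (rule sums_zero_monic_basis[where b = "monom 1" and d = "degree T", OF _ _ monomials])
      (simp_all add: degree_monom_eq)
  then show ?thesis
    by (simp add: mult_ac)
qed

lemma meixner2_orth_meixner2_poly:
  assumes "c \<noteq> 0" "\<bar>c\<bar> < 1"
  shows "meixner2_orth p \<beta> c m (meixner2_poly p \<beta> c m)"
  unfolding meixner2_orth_def
proof (intro allI impI)
  fix i j assume i: "i < p" and j: "j < m i"
  have rising: "(\<lambda>k. poly (rising_poly (\<beta> i) t) (real k)
          * (poly (meixner2_poly p \<beta> c m) (real k) * meixner_weight (\<beta> i) c k)) sums 0"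
    if "t \<le> j" for t
  proof -
    have "pochhammer (\<beta> i - (\<beta> i + real t)) (m i) = 0"
      using that j by (subst pochhammer_eq_0_iff) auto
    moreover have "i \<in> {..<p}"
      using i by simp
    ultimately have zero: "(\<Prod>l<p. pochhammer (\<beta> l - (\<beta> i + real t)) (m l)) = 0"
      by (intro prod_zero) blast+
    have "(\<lambda>k. poly (rising_poly (\<beta> i) t) (real k) * poly (meixner2_poly p \<beta> c m) (real k)
        * meixner_weight (\<beta> i) c k) sums 0"
      using meixner2_poly_rising_moment[OF assms, of "\<beta> i" t p \<beta> m] unfolding zero by simp
    then show ?thesis
      by (simp add: mult_ac)
  qed
  have "(\<lambda>k. poly (monom 1 j) (real k)
          * (poly (meixner2_poly p \<beta> c m) (real k) * meixner_weight (\<beta> i) c k)) sums 0"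
    using sums_zero_monic_basis[OF degree_rising_poly lead_coeff_rising_poly rising]
    by (simp add: degree_monom_eq)
  then show "(\<lambda>k. real k ^ j * poly (meixner2_poly p \<beta> c m) (real k) * meixner_weight (\<beta> i) c k) sums 0"
    by (simp add: poly_monom mult_ac)
qed

lemma prod_pochhammer_shift_nonzero:
  fixes \<beta> :: "nat \<Rightarrow> real" and m :: "nat \<Rightarrow> nat"
  assumes "i < p" and distinct: "\<And>i j. i < p \<Longrightarrow> j < p \<Longrightarrow> i \<noteq> j \<Longrightarrow> \<beta> i - \<beta> j \<notin> \<int>"
  shows "(\<Prod>j<p. pochhammer (\<beta> j - (\<beta> i + real (m i))) (m j)) \<noteq> 0"
proof -
  have "pochhammer (\<beta> j - (\<beta> i + real (m i))) (m j) \<noteq> 0" if "j < p" for j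
  proof
    assume "pochhammer (\<beta> j - (\<beta> i + real (m i))) (m j) = 0"
    then obtain k where "k < m j" "\<beta> j - (\<beta> i + real (m i)) = - real k"
      by (auto simp: pochhammer_eq_0_iff)
    then have k: "k < m j" "\<beta> j - \<beta> i = real (m i) - real k"
      by simp_all
    show False
    proof (cases "j = i")
      case False
      have "real (m i) - real k \<in> \<int>" by simp
      with k(2) distinct[OF \<open>j < p\<close> \<open>i < p\<close> False] show False by simp
    qed (use k in simp)
  qed
  then show ?thesis
    by (simp add: prod_zero_iff)
qed

lemma meixner2_orth_smult_lower_index_eq_0:
  assumes c: "c \<noteq> 0" "\<bar>c\<bar> < 1" and "i < p" "0 < \<beta> i" "m' i < m i"
    and distinct: "\<And>i j. i < p \<Longrightarrow> j < p \<Longrightarrow> i \<noteq> j \<Longrightarrow> \<beta> i - \<beta> j \<notin> \<int>"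
    and orth: "meixner2_orth p \<beta> c m (smult a (meixner2_poly p \<beta> c m'))"
  shows "a = 0"
proof -
  have "c \<noteq> 1"
    using c by auto
  define Q where "Q = meixner2_poly p \<beta> c m'"
  define V where "V = pochhammer (\<beta> i) (m' i) * ((c / (c - 1)) ^ (\<Sum>j<p. m' j)
      * (1 - c) powr (- (\<beta> i + real (m' i))) * (\<Prod>j<p. pochhammer (\<beta> j - (\<beta> i + real (m' i))) (m' j)))"
  have "(\<lambda>k. poly (rising_poly (\<beta> i) (m' i)) (real k) * poly (smult a Q) (real k) * meixner_weight (\<beta> i) c k)
      sums 0"
    using orth \<open>i < p\<close> \<open>m' i < m i\<close> unfolding Q_def by (intro meixner2_orth_test_poly) simp_all
  moreover have "(\<lambda>k. poly (rising_poly (\<beta> i) (m' i)) (real k) * poly (smult a Q) (real k) * meixner_weight (\<beta> i) c k)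
      sums (a * V)"
    using sums_mult[OF meixner2_poly_rising_moment[OF c, of "\<beta> i" "m' i" p \<beta> m'], of a]
    by (simp add: Q_def V_def mult_ac)
  ultimately have "0 = a * V"
    by (rule sums_unique2)
  moreover have "V \<noteq> 0"
    using c \<open>c \<noteq> 1\<close> pochhammer_pos[OF \<open>0 < \<beta> i\<close>, of "m' i"]
      prod_pochhammer_shift_nonzero[where \<beta> = \<beta> and m = m', OF \<open>i < p\<close> distinct]
    by (simp add: V_def)
  ultimately show ?thesis
    by simp
qed

lemma sum_eq_Suc_decrementE:
  fixes m :: "nat \<Rightarrow> nat"
  assumes "(\<Sum>j<p. m j) = Suc N"
  obtains i where "i < p" "0 < m i" "(\<Sum>j<p. (m(i := m i - 1)) j) = N"
proof -
  obtain i where i: "i < p" "0 < m i"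
    using assms by (metis sum.neutral lessThan_iff nat.distinct(1) not_gr0)
  have "(\<Sum>j<p. m j) = m i + (\<Sum>j\<in>{..<p} - {i}. m j)"
    "(\<Sum>j<p. (m(i := m i - 1)) j) = (m i - 1) + (\<Sum>j\<in>{..<p} - {i}. m j)"
    using i by (simp_all add: sum.remove)
  with assms i show ?thesis
    by (intro that) simp_all
qed

lemma meixner2_orth_imp_eq_smult:
  assumes c: "c \<noteq> 0" "\<bar>c\<bar> < 1" and pos: "\<And>i. i < p \<Longrightarrow> 0 < \<beta> i"
    and distinct: "\<And>i j. i < p \<Longrightarrow> j < p \<Longrightarrow> i \<noteq> j \<Longrightarrow> \<beta> i - \<beta> j \<notin> \<int>"
  shows "(\<Sum>j<p. m j) = N \<Longrightarrow> degree D \<le> N \<Longrightarrow> meixner2_orth p \<beta> c m D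
           \<Longrightarrow> D = smult (coeff D N) (meixner2_poly p \<beta> c m)"
proof (induction N arbitrary: m D)
  case 0
  have "c \<noteq> 1"
    using c by auto
  then have "meixner2_poly p \<beta> c m = 1"
    using degree_meixner2_poly[OF c(1), of p \<beta> m] lead_coeff_meixner2_poly[OF c(1), of p \<beta> m] 0
      degree_0_id[of "meixner2_poly p \<beta> c m"]
    by (simp add: one_pCons)
  moreover have "D = [:coeff D 0:]"
    using degree_0_id[of D] 0 by simp
  ultimately show ?case
    by (simp add: one_pCons)
next
  case (Suc N)
  obtain i where i: "i < p" "0 < m i" and sum_m': "(\<Sum>j<p. (m(i := m i - 1)) j) = N"
    using sum_eq_Suc_decrementE[OF Suc.prems(1)] by blast
  define m' where "m' = m(i := m i - 1)"
  define Q where "Q = meixner2_poly p \<beta> c m"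
  have "c \<noteq> 1"
    using c by auto
  then have Q: "degree Q = Suc N" "lead_coeff Q = 1"
    using degree_meixner2_poly[OF c(1) \<open>c \<noteq> 1\<close>, of p \<beta> m]
      lead_coeff_meixner2_poly[OF c(1) \<open>c \<noteq> 1\<close>, of p \<beta> m] Suc.prems(1)
    by (simp_all add: Q_def)
  define D' where "D' = D - smult (coeff D (Suc N)) Q"
  have "degree D' \<le> N"
    unfolding D'_def using Suc.prems(2) Q by (rule degree_diff_smult_monic_le)
  moreover have orth_D': "meixner2_orth p \<beta> c m D'"
    unfolding D'_def Q_def
    using Suc.prems(3) meixner2_orth_smult[OF meixner2_orth_meixner2_poly[OF c]]
    by (rule meixner2_orth_diff)
  moreover have "meixner2_orth p \<beta> c m' D'"
    by (rule meixner2_orth_mono[OF orth_D']) (simp add: m'_def)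
  ultimately have D': "D' = smult (coeff D' N) (meixner2_poly p \<beta> c m')"
    using Suc.IH[OF sum_m'[folded m'_def]] by blast
  have "meixner2_orth p \<beta> c m (smult (coeff D' N) (meixner2_poly p \<beta> c m'))"
    using orth_D' by (simp only: D'[symmetric])
  moreover have "m' i < m i"
    using i by (simp add: m'_def)
  ultimately have "coeff D' N = 0"
    using meixner2_orth_smult_lower_index_eq_0[where \<beta> = \<beta> and i = i, OF c i(1) pos[OF i(1)] _ distinct]
    by blast
  then have "D' = 0"
    by (subst D') simp
  then show ?case
    by (simp add: D'_def Q_def)
qed

lemma hypergeom_minus_of_nat:
  "hypergeom (- real x # as) bs z =
     (\<Sum>l\<le>x. pochhammer (- real x) l * prod_list (map (\<lambda>a. pochhammer a l) as)
        / prod_list (map (\<lambda>b. pochhammer b l) bs) * z ^ l / fact l)"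
  unfolding hypergeom_def list.map prod_list.Cons
  by (rule suminf_finite) (auto simp: pochhammer_eq_0_iff)

lemma pochhammer_minus_of_nat_div_fact:
  "pochhammer (- of_nat x) l / fact l = (-1) ^ l * (of_nat (x choose l) :: 'a::field_char_0)"
proof -
  have "(-1) ^ l * of_nat (x choose l) = (-1) ^ l * ((-1) ^ l * pochhammer (- of_nat x) l / (fact l :: 'a))"
    by (simp add: binomial_gbinomial gbinomial_pochhammer)
  also have "\<dots> = pochhammer (- of_nat x) l / fact l"
    by (simp flip: power_mult_distrib)
  finally show ?thesis ..
qed

lemma hypergeom_meixner2:
  assumes pos: "\<And>j. j < p \<Longrightarrow> 0 < \<beta> j"
  shows "(\<Prod>j<p. pochhammer (\<beta> j) (m j))
           * hypergeom (- real x # map (\<lambda>j. \<beta> j + real (m j)) [0..<p]) (map \<beta> [0..<p]) z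
         = (\<Sum>l\<le>x. real (x choose l) * (- z) ^ l * poly (rising_product p \<beta> m) (real l))"
proof -
  have list_prod: "prod_list (map f [0..<p]) = (\<Prod>j<p. f j)" for f :: "nat \<Rightarrow> real"
    by (simp add: prod.distinct_set_conv_list[symmetric] atLeast0LessThan)
  have rising: "(\<Prod>j<p. pochhammer (\<beta> j) (m j)) * (\<Prod>j<p. pochhammer (\<beta> j + real (m j)) l)
      / (\<Prod>j<p. pochhammer (\<beta> j) l) = poly (rising_product p \<beta> m) (real l)" for l
  proof -
    have "pochhammer (\<beta> j) l \<noteq> 0" if "j < p" for j
      using pochhammer_pos[OF pos[OF that], of l] by simp
    then have "(\<Prod>j<p. pochhammer (\<beta> j) l) \<noteq> 0"
      by (auto simp: prod_zero_iff)
    moreover have "pochhammer (\<beta> j) (m j) * pochhammer (\<beta> j + real (m j)) l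
        = pochhammer (\<beta> j) l * pochhammer (\<beta> j + real l) (m j)" for j
      by (metis add.commute pochhammer_product')
    ultimately show ?thesis
      by (simp add: poly_rising_product field_simps flip: prod.distrib)
  qed
  have "(\<Prod>j<p. pochhammer (\<beta> j) (m j)) * (pochhammer (- real x) l
        * (\<Prod>j<p. pochhammer (\<beta> j + real (m j)) l) / (\<Prod>j<p. pochhammer (\<beta> j) l) * z ^ l / fact l)
      = real (x choose l) * (- z) ^ l * poly (rising_product p \<beta> m) (real l)" for l
  proof -
    have "(\<Prod>j<p. pochhammer (\<beta> j) (m j)) * (pochhammer (- real x) l
        * (\<Prod>j<p. pochhammer (\<beta> j + real (m j)) l) / (\<Prod>j<p. pochhammer (\<beta> j) l) * z ^ l / fact l)
      = ((\<Prod>j<p. pochhammer (\<beta> j) (m j)) * (\<Prod>j<p. pochhammer (\<beta> j + real (m j)) l)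
          / (\<Prod>j<p. pochhammer (\<beta> j) l)) * (pochhammer (- real x) l / fact l) * z ^ l"
      by (simp add: field_simps)
    also have "\<dots> = real (x choose l) * (- z) ^ l * poly (rising_product p \<beta> m) (real l)"
      by (simp add: rising pochhammer_minus_of_nat_div_fact power_minus[of z])
    finally show ?thesis .
  qed
  then show ?thesis
    by (simp add: hypergeom_minus_of_nat sum_distrib_left list_prod o_def)
qed

lemma is_typeII_meixner2_eq_meixner2_poly:
  assumes "0 < c" "c < 1" and pos: "\<And>i. i < p \<Longrightarrow> 0 < \<beta> i"
    and distinct: "\<And>i j. i < p \<Longrightarrow> j < p \<Longrightarrow> i \<noteq> j \<Longrightarrow> \<beta> i - \<beta> j \<notin> \<int>"
    and B: "is_typeII_meixner2 p \<beta> c n B"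
  shows "B = meixner2_poly p \<beta> c n"
proof -
  have c: "c \<noteq> 0" "\<bar>c\<bar> < 1"
    using assms(1,2) by auto
  have degree_B: "degree B = (\<Sum>i<p. n i)" and lead_B: "lead_coeff B = 1"
    using B unfolding is_typeII_meixner2_def by blast+
  have "meixner2_orth p \<beta> c n B"
    using B pos by (simp add: is_typeII_meixner2_def meixner2_orth_def meixner2_weight_eq_meixner_weight)
  then have "B = smult (coeff B (\<Sum>i<p. n i)) (meixner2_poly p \<beta> c n)"
    using degree_B
    by (intro meixner2_orth_imp_eq_smult[where p = p and \<beta> = \<beta> and m = n, OF c pos distinct refl]) simp_all
  then show ?thesis
    using degree_B lead_B by simp
qed

lemma poly_meixner2_poly_hypergeom:
  assumes "0 < c" and pos: "\<And>i. i < p \<Longrightarrow> 0 < \<beta> i"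
  shows "poly (meixner2_poly p \<beta> c n) (real x) =
           (c / (c - 1)) ^ (\<Sum>i<p. n i) * (\<Prod>j<p. pochhammer (\<beta> j) (n j)) * (1 / c ^ x)
           * hypergeom (- real x # map (\<lambda>j. \<beta> j + real (n j)) [0..<p]) (map \<beta> [0..<p]) (1 - c)"
proof -
  have "poly (falling_scale ((c - 1) / c) (rising_product p \<beta> n)) (real x)
      = (1 / c ^ x) * (\<Sum>l\<le>x. real (x choose l) * (c - 1) ^ l * poly (rising_product p \<beta> n) (real l))"
    using binomial_sum_falling_scale[of "c - 1" x] assms(1) by simp
  also have "(\<Sum>l\<le>x. real (x choose l) * (c - 1) ^ l * poly (rising_product p \<beta> n) (real l))
      = (\<Prod>j<p. pochhammer (\<beta> j) (n j))
        * hypergeom (- real x # map (\<lambda>j. \<beta> j + real (n j)) [0..<p]) (map \<beta> [0..<p]) (1 - c)"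
    using hypergeom_meixner2[where p = p and \<beta> = \<beta> and m = n and x = x and z = "1 - c", OF pos]
    by simp
  finally show ?thesis
    by (simp add: meixner2_poly_def mult_ac)
qed

theorem mainTheorem4:
  fixes p :: nat and \<beta> :: "nat \<Rightarrow> real" and c :: real and n :: "nat \<Rightarrow> nat"
    and B :: "real poly"
  assumes "0 < c" and "c < 1"
    and "\<And>i. i < p \<Longrightarrow> 0 < \<beta> i"
    and "\<And>i j. i < p \<Longrightarrow> j < p \<Longrightarrow> i \<noteq> j \<Longrightarrow> \<beta> i - \<beta> j \<notin> \<int>"
    and "is_typeII_meixner2 p \<beta> c n B"
  shows "\<forall>x::nat. poly B (real x) =
           (c / (c - 1)) ^ (\<Sum>i<p. n i) * (\<Prod>j<p. pochhammer (\<beta> j) (n j)) * (1 / c ^ x)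
           * hypergeom (- real x # map (\<lambda>j. \<beta> j + real (n j)) [0..<p]) (map \<beta> [0..<p]) (1 - c)"
proof -
  have "B = meixner2_poly p \<beta> c n"
    using assms by (rule is_typeII_meixner2_eq_meixner2_poly)
  then show ?thesis
    using poly_meixner2_poly_hypergeom[OF assms(1,3)] by simp
qed

end
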